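(* Let $\epsilon>0$ be a constant. If the aspect ratio $\mathcal{A}=\mathcal{W}_{\max}/\mathcal{W}_{\min}$ of the input graph $G$ (with $n$ vertices) satisfies $\mathcal{A}=O(\mathrm{poly}(n))$, then the number of layer-contraction phases (calls to ContractLayer) performed by ParHAC$(G,\epsilon)$ is $O(\log n)$.
   Context: Setting: an undirected graph $G=(V,E,w)$ with $n$ vertices and positive edge weights; $\mathcal{W}_{\max}$ and $\mathcal{W}_{\min}$ are its largest and smallest edge weights. A partition of $V$ into clusters is maintained (initially singletons), together with the cluster graph $H$ whose vertices are the clusters, with an edge between clusters $X\neq Y$ iff $G$ has an edge between them, of average-linkage weight $\mathcal{W}(X,Y)=\sum_{(x,y)\in E,\,x\in X,\,y\in Y} w(x,y)/(|X||Y|)$. Algorithm ParHAC$(G,\epsilon)$: while $H$ has edges, let $W_{\max}$ be the current maximum edge weight of $H$ and call ContractLayer with threshold $T_L=W_{\max}/(1+\epsilon)$. A call to ContractLayer (a layer-contraction phase) performs a sequence of merges of edges of $H$ (replacing two adjacent clusters by their union, with weights of $H$ updated by the average-linkage formula), each merged edge having weight at least $T_L/(1+\epsilon)$ at the time of merging, and returns only when every edge of $H$ has weight less than $T_L$. *)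

theory Defs
  imports Main "HOL-Library.FuncSet" Complex_Main
begin

text \<open>An undirected weighted graph on vertices of type nat: finite vertex set V,
  symmetric irreflexive edge relation E (each undirected edge appears as both
  ordered pairs), positive symmetric edge weights w.\<close>
definition wf_graph :: "nat set \<Rightarrow> (nat \<times> nat) set \<Rightarrow> (nat \<Rightarrow> nat \<Rightarrow> real) \<Rightarrow> bool" where
  "wf_graph V E w \<longleftrightarrow> finite V \<and> E \<subseteq> V \<times> V \<and> sym E \<and> irrefl E
     \<and> (\<forall>(x,y)\<in>E. w x y > 0) \<and> (\<forall>x y. w x y = w y x)"

definition graph_Wmax :: "(nat \<times> nat) set \<Rightarrow> (nat \<Rightarrow> nat \<Rightarrow> real) \<Rightarrow> real" where
  "graph_Wmax E w = Max ((\<lambda>(x,y). w x y) ` E)"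

definition graph_Wmin :: "(nat \<times> nat) set \<Rightarrow> (nat \<Rightarrow> nat \<Rightarrow> real) \<Rightarrow> real" where
  "graph_Wmin E w = Min ((\<lambda>(x,y). w x y) ` E)"

text \<open>Average-linkage weight between two (disjoint) clusters; each undirected edge
  between X and Y is counted once as the ordered pair (x,y) with x in X, y in Y.\<close>
definition cw :: "(nat \<times> nat) set \<Rightarrow> (nat \<Rightarrow> nat \<Rightarrow> real) \<Rightarrow> nat set \<Rightarrow> nat set \<Rightarrow> real" where
  "cw E w X Y = (\<Sum>(x,y)\<in>E \<inter> (X \<times> Y). w x y) / (real (card X) * real (card Y))"

definition hedge :: "(nat \<times> nat) set \<Rightarrow> nat set set \<Rightarrow> nat set \<Rightarrow> nat set \<Rightarrow> bool" where
  "hedge E P X Y \<longleftrightarrow> X \<in> P \<and> Y \<in> P \<and> X \<noteq> Y \<and> (\<exists>x\<in>X. \<exists>y\<in>Y. (x,y) \<in> E)"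

definition has_hedge :: "(nat \<times> nat) set \<Rightarrow> nat set set \<Rightarrow> bool" where
  "has_hedge E P \<longleftrightarrow> (\<exists>X Y. hedge E P X Y)"

definition H_Wmax :: "(nat \<times> nat) set \<Rightarrow> (nat \<Rightarrow> nat \<Rightarrow> real) \<Rightarrow> nat set set \<Rightarrow> real" where
  "H_Wmax E w P = Max {cw E w X Y | X Y. hedge E P X Y}"

definition merge_step :: "(nat \<times> nat) set \<Rightarrow> (nat \<Rightarrow> nat \<Rightarrow> real) \<Rightarrow> real \<Rightarrow> real
    \<Rightarrow> nat set set \<Rightarrow> nat set set \<Rightarrow> bool" where
  "merge_step E w eps T P P' \<longleftrightarrow> (\<exists>X Y. hedge E P X Y \<and> cw E w X Y \<ge> T / (1 + eps)
       \<and> P' = insert (X \<union> Y) (P - {X, Y}))"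

definition contract_layer :: "(nat \<times> nat) set \<Rightarrow> (nat \<Rightarrow> nat \<Rightarrow> real) \<Rightarrow> real \<Rightarrow> real
    \<Rightarrow> nat set set \<Rightarrow> nat set set \<Rightarrow> bool" where
  "contract_layer E w eps T P P' \<longleftrightarrow> (merge_step E w eps T)\<^sup>*\<^sup>* P P'
       \<and> (\<forall>X Y. hedge E P' X Y \<longrightarrow> cw E w X Y < T)"

text \<open>A complete run of ParHAC(G,eps) performing exactly k calls of ContractLayer,
  with Ps i the partition before the (i+1)-st call.\<close>
definition parhac_run :: "nat set \<Rightarrow> (nat \<times> nat) set \<Rightarrow> (nat \<Rightarrow> nat \<Rightarrow> real) \<Rightarrow> real
    \<Rightarrow> (nat \<Rightarrow> nat set set) \<Rightarrow> nat \<Rightarrow> bool" where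
  "parhac_run V E w eps Ps k \<longleftrightarrow>
     Ps 0 = (\<lambda>v. {v}) ` V
     \<and> (\<forall>i<k. has_hedge E (Ps i)
          \<and> contract_layer E w eps (H_Wmax E w (Ps i) / (1 + eps)) (Ps i) (Ps (Suc i)))
     \<and> \<not> has_hedge E (Ps k)"

end

theory Submission
  imports Defs
begin

text \<open>An average-linkage weight is a sum of between one and \<open>|X||Y| \<le> n\<^sup>2\<close> edge weights
  divided by \<open>|X||Y|\<close>, so every edge of the cluster graph weighs between \<open>Wmin/n\<^sup>2\<close> and
  \<open>Wmax\<close>. A layer-contraction phase with threshold \<open>W/(1+eps)\<close> returns only once every edge
  weighs less than that threshold, so the maximum weight of the cluster graph shrinks by a
  factor \<open>1+eps\<close> per phase (only this exit condition matters, not the bound on the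
  individual merges). After \<open>k\<close> phases therefore \<open>(1+eps)\<^sup>k\<^sup>-\<^sup>1 \<le> n\<^sup>2 Wmax/Wmin\<close>, which is
  polynomial in \<open>n\<close> when the aspect ratio is, whence \<open>k = O(log n)\<close>.\<close>

definition clusters_within :: "nat set \<Rightarrow> nat set set \<Rightarrow> bool" where
  "clusters_within V P \<longleftrightarrow> (\<forall>X\<in>P. X \<noteq> {} \<and> X \<subseteq> V)"

lemma merge_step_clusters_within:
  "merge_step E w eps T P P' \<Longrightarrow> clusters_within V P \<Longrightarrow> clusters_within V P'"
  unfolding merge_step_def clusters_within_def hedge_def by auto

lemma merge_steps_clusters_within:
  "(merge_step E w eps T)\<^sup>*\<^sup>* P P' \<Longrightarrow> clusters_within V P \<Longrightarrow> clusters_within V P'"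
  by (induction rule: rtranclp_induct) (auto intro: merge_step_clusters_within)

lemma parhac_run_clusters_within:
  assumes run: "parhac_run V E w eps Ps k" and "i \<le> k"
  shows "clusters_within V (Ps i)"
  using \<open>i \<le> k\<close>
proof (induction i)
  case 0
  then show ?case using run unfolding parhac_run_def clusters_within_def by auto
next
  case (Suc i)
  then have "(merge_step E w eps (H_Wmax E w (Ps i) / (1 + eps)))\<^sup>*\<^sup>* (Ps i) (Ps (Suc i))"
    using run unfolding parhac_run_def contract_layer_def by auto
  with Suc show ?case using merge_steps_clusters_within by auto
qed

lemma H_Wmax_attained:
  assumes "finite V" "clusters_within V P" "has_hedge E P"
  obtains X Y where "hedge E P X Y" "H_Wmax E w P = cw E w X Y"
proof -
  have "P \<subseteq> Pow V" using assms(2) unfolding clusters_within_def by auto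
  then have "finite P" using assms(1) finite_subset by blast
  moreover have "{cw E w X Y | X Y. hedge E P X Y} \<subseteq> (\<lambda>(X, Y). cw E w X Y) ` (P \<times> P)"
    unfolding hedge_def by auto
  ultimately have "finite {cw E w X Y | X Y. hedge E P X Y}" using finite_subset by blast
  moreover have "{cw E w X Y | X Y. hedge E P X Y} \<noteq> {}"
    using assms(3) unfolding has_hedge_def by auto
  ultimately have "H_Wmax E w P \<in> {cw E w X Y | X Y. hedge E P X Y}"
    unfolding H_Wmax_def by (rule Max_in)
  then show ?thesis using that by auto
qed

lemma contract_layer_H_Wmax_less:
  assumes "contract_layer E w eps T P P'" "finite V" "clusters_within V P'" "has_hedge E P'"
  shows "H_Wmax E w P' < T"
proof -
  obtain X Y where "hedge E P' X Y" "H_Wmax E w P' = cw E w X Y"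
    using H_Wmax_attained[OF assms(2-4)] .
  then show ?thesis using assms(1) unfolding contract_layer_def by auto
qed

lemma parhac_run_H_Wmax_decay:
  assumes run: "parhac_run V E w eps Ps k" and "finite V" "eps \<ge> 0" "i < k"
  shows "H_Wmax E w (Ps i) * (1 + eps) ^ i \<le> H_Wmax E w (Ps 0)"
  using \<open>i < k\<close>
proof (induction i)
  case 0
  then show ?case by simp
next
  case (Suc i)
  have layer: "contract_layer E w eps (H_Wmax E w (Ps i) / (1 + eps)) (Ps i) (Ps (Suc i))"
    and hedge: "has_hedge E (Ps (Suc i))"
    using run Suc.prems unfolding parhac_run_def by auto
  have "clusters_within V (Ps (Suc i))"
    using parhac_run_clusters_within[OF run] Suc.prems by simp
  then have "H_Wmax E w (Ps (Suc i)) < H_Wmax E w (Ps i) / (1 + eps)"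
    using contract_layer_H_Wmax_less[OF layer \<open>finite V\<close> _ hedge] by simp
  then have drop: "H_Wmax E w (Ps (Suc i)) * (1 + eps) \<le> H_Wmax E w (Ps i)"
    using \<open>eps \<ge> 0\<close> by (simp add: field_simps)
  have "H_Wmax E w (Ps (Suc i)) * (1 + eps) ^ Suc i
      = H_Wmax E w (Ps (Suc i)) * (1 + eps) * (1 + eps) ^ i"
    by (simp add: mult_ac)
  also have "\<dots> \<le> H_Wmax E w (Ps i) * (1 + eps) ^ i"
    using drop \<open>eps \<ge> 0\<close> by (intro mult_right_mono) auto
  also have "\<dots> \<le> H_Wmax E w (Ps 0)"
    using Suc by simp
  finally show ?case .
qed

lemma wf_graph_finite_edges: "wf_graph V E w \<Longrightarrow> finite E"
  unfolding wf_graph_def by (meson finite_SigmaI finite_subset)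

lemma graph_Wmin_le: "wf_graph V E w \<Longrightarrow> (x, y) \<in> E \<Longrightarrow> graph_Wmin E w \<le> w x y"
  unfolding graph_Wmin_def using wf_graph_finite_edges by (intro Min_le) force+

lemma graph_Wmax_ge: "wf_graph V E w \<Longrightarrow> (x, y) \<in> E \<Longrightarrow> w x y \<le> graph_Wmax E w"
  unfolding graph_Wmax_def using wf_graph_finite_edges by (intro Max_ge) force+

lemma graph_Wmin_pos:
  assumes "wf_graph V E w" "E \<noteq> {}"
  shows "graph_Wmin E w > 0"
proof -
  have "graph_Wmin E w \<in> (\<lambda>(x, y). w x y) ` E"
    unfolding graph_Wmin_def using wf_graph_finite_edges[OF assms(1)] assms(2) by (intro Min_in) auto
  then show ?thesis using assms(1) unfolding wf_graph_def by auto
qed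

lemma wf_graph_card_ge_2:
  assumes g: "wf_graph V E w" and "(x, y) \<in> E"
  shows "2 \<le> card V"
proof -
  have "x \<noteq> y" "{x, y} \<subseteq> V" using assms unfolding wf_graph_def irrefl_def by auto
  then have "card {x, y} \<le> card V" using g unfolding wf_graph_def by (intro card_mono) auto
  with \<open>x \<noteq> y\<close> show ?thesis by simp
qed

lemma cw_ge_graph_Wmin:
  assumes g: "wf_graph V E w" and "X \<subseteq> V" "Y \<subseteq> V" and xy: "(x, y) \<in> E \<inter> (X \<times> Y)"
  shows "graph_Wmin E w / real (card V) ^ 2 \<le> cw E w X Y"
proof -
  have fin: "finite X" "finite Y"
    using assms(2,3) g finite_subset unfolding wf_graph_def by auto
  then have "card X > 0" "card Y > 0"
    using xy card_gt_0_iff by blast+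
  then have "0 < real (card X) * real (card Y)"
    by simp
  moreover have "real (card X) * real (card Y) \<le> real (card V) ^ 2"
    using assms(2,3) g unfolding wf_graph_def power2_eq_square
    by (intro mult_mono) (auto intro: card_mono)
  moreover have "graph_Wmin E w > 0"
    using graph_Wmin_pos[OF g] xy by auto
  moreover have "graph_Wmin E w \<le> (\<Sum>(x, y)\<in>E \<inter> (X \<times> Y). w x y)"
  proof -
    have "w x y \<le> (\<Sum>(x, y)\<in>E \<inter> (X \<times> Y). w x y)"
      using xy fin g member_le_sum[of "(x, y)" "E \<inter> (X \<times> Y)" "\<lambda>(x, y). w x y"]
      unfolding wf_graph_def by (fastforce simp: less_imp_le)
    then show ?thesis using graph_Wmin_le[OF g] xy by fastforce
  qed
  ultimately show ?thesis
    unfolding cw_def by (intro frac_le) auto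
qed

lemma cw_le_graph_Wmax:
  assumes g: "wf_graph V E w" and "E \<noteq> {}" "X \<subseteq> V" "Y \<subseteq> V" "X \<noteq> {}" "Y \<noteq> {}"
  shows "cw E w X Y \<le> graph_Wmax E w"
proof -
  have fin: "finite X" "finite Y"
    using assms(3,4) g finite_subset unfolding wf_graph_def by auto
  obtain x y where "(x, y) \<in> E" using \<open>E \<noteq> {}\<close> by auto
  then have Wmax_nonneg: "graph_Wmax E w \<ge> 0"
    using graph_Wmax_ge[OF g] g unfolding wf_graph_def by force
  have "(\<Sum>(x, y)\<in>E \<inter> (X \<times> Y). w x y) \<le> (\<Sum>p\<in>E \<inter> (X \<times> Y). graph_Wmax E w)"
    by (intro sum_mono) (auto intro: graph_Wmax_ge[OF g])
  also have "\<dots> = real (card (E \<inter> (X \<times> Y))) * graph_Wmax E w"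
    by simp
  also have "\<dots> \<le> real (card (X \<times> Y)) * graph_Wmax E w"
    using fin Wmax_nonneg by (intro mult_right_mono of_nat_mono card_mono) auto
  finally have "(\<Sum>(x, y)\<in>E \<inter> (X \<times> Y). w x y) \<le> real (card X) * real (card Y) * graph_Wmax E w"
    by (simp add: card_cartesian_product)
  moreover have "0 < real (card X) * real (card Y)"
    using fin assms(5,6) by (auto simp: card_gt_0_iff)
  ultimately show ?thesis unfolding cw_def by (simp add: divide_le_eq mult.commute)
qed

lemma H_Wmax_bounds:
  assumes g: "wf_graph V E w" and "clusters_within V P" "has_hedge E P"
  shows "graph_Wmin E w / real (card V) ^ 2 \<le> H_Wmax E w P" "H_Wmax E w P \<le> graph_Wmax E w"
proof -
  have "finite V" using g unfolding wf_graph_def by simp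
  then obtain X Y where XY: "hedge E P X Y" "H_Wmax E w P = cw E w X Y"
    using H_Wmax_attained assms(2,3) by blast
  then obtain x y where xy: "(x, y) \<in> E \<inter> (X \<times> Y)"
    and XY_in_V: "X \<subseteq> V" "Y \<subseteq> V" "X \<noteq> {}" "Y \<noteq> {}"
    using assms(2) unfolding hedge_def clusters_within_def by auto
  show "graph_Wmin E w / real (card V) ^ 2 \<le> H_Wmax E w P"
    using XY(2) cw_ge_graph_Wmin[OF g XY_in_V(1,2) xy] by simp
  have "E \<noteq> {}" using xy by auto
  then show "H_Wmax E w P \<le> graph_Wmax E w"
    using XY(2) cw_le_graph_Wmax[OF g _ XY_in_V] by simp
qed

lemma parhac_run_phases_bound:
  assumes g: "wf_graph V E w" and run: "parhac_run V E w eps Ps (Suc j)" and "eps \<ge> 0"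
  shows "(1 + eps) ^ j \<le> graph_Wmax E w / graph_Wmin E w * real (card V) ^ 2"
proof -
  have hedges: "has_hedge E (Ps 0)" "has_hedge E (Ps j)"
    using run unfolding parhac_run_def by auto
  then have "E \<noteq> {}" unfolding has_hedge_def hedge_def by auto
  then have "card V \<ge> 2" using wf_graph_card_ge_2[OF g] by auto
  have Wmin_pos: "graph_Wmin E w > 0" using graph_Wmin_pos[OF g \<open>E \<noteq> {}\<close>] .
  have "graph_Wmin E w / real (card V) ^ 2 * (1 + eps) ^ j \<le> H_Wmax E w (Ps j) * (1 + eps) ^ j"
    using H_Wmax_bounds(1)[OF g parhac_run_clusters_within[OF run] hedges(2)] \<open>eps \<ge> 0\<close>
    by (intro mult_right_mono) auto
  also have "\<dots> \<le> H_Wmax E w (Ps 0)"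
    using parhac_run_H_Wmax_decay[OF run] g \<open>eps \<ge> 0\<close> unfolding wf_graph_def by auto
  also have "\<dots> \<le> graph_Wmax E w"
    using H_Wmax_bounds(2)[OF g parhac_run_clusters_within[OF run] hedges(1)] by auto
  finally show ?thesis using Wmin_pos \<open>card V \<ge> 2\<close> by (simp add: field_simps)
qed

lemma le_log_of_power_le_poly:
  fixes b c n :: real and j d :: nat
  assumes "b > 1" "c \<ge> 1" "n \<ge> 2" "b ^ j \<le> c * n ^ d"
  shows "real (Suc j) \<le> (1 / ln 2 + ln c / (ln b * ln 2) + real d / ln b) * ln n"
proof -
  have "ln (b ^ j) \<le> ln (c * n ^ d)"
    using assms by (subst ln_le_cancel_iff) auto
  then have "real j * ln b \<le> ln c + real d * ln n"
    using assms by (simp add: ln_mult ln_realpow)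
  then have "real j \<le> ln c / ln b + real d * ln n / ln b"
    using assms by (simp add: field_simps)
  moreover have "1 \<le> ln n / ln 2"
    using assms by simp
  moreover from this have "ln c / ln b * 1 \<le> ln c / ln b * (ln n / ln 2)"
    using assms by (intro mult_left_mono) auto
  ultimately have "real (Suc j) \<le> ln n / ln 2 + ln c / ln b * (ln n / ln 2) + real d * ln n / ln b"
    by linarith
  then show ?thesis by (simp add: field_simps)
qed

lemma parhac_run_phases_le_log:
  assumes g: "wf_graph V E w" and run: "parhac_run V E w eps Ps k"
    and ratio: "E \<noteq> {} \<Longrightarrow> graph_Wmax E w / graph_Wmin E w \<le> c * real (card V) ^ d"
    and "eps > 0" "c \<ge> 1"
  shows "real k \<le> (1 / ln 2 + ln c / (ln (1 + eps) * ln 2) + real (d + 2) / ln (1 + eps))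
    * ln (real (card V))"
proof (cases k)
  case 0
  have "ln (real (card V)) \<ge> 0" by (cases "card V = 0") auto
  with 0 show ?thesis
    using assms(4,5) by (auto intro!: mult_nonneg_nonneg add_nonneg_nonneg divide_nonneg_pos)
next
  case (Suc j)
  then have "E \<noteq> {}" using run unfolding parhac_run_def has_hedge_def hedge_def by auto
  then have n_ge_2: "real (card V) \<ge> 2" using wf_graph_card_ge_2[OF g] by fastforce
  have "(1 + eps) ^ j \<le> graph_Wmax E w / graph_Wmin E w * real (card V) ^ 2"
    using parhac_run_phases_bound[OF g] run Suc \<open>eps > 0\<close> by simp
  also have "\<dots> \<le> c * real (card V) ^ d * real (card V) ^ 2"
    using ratio[OF \<open>E \<noteq> {}\<close>] by (intro mult_right_mono) auto
  also have "\<dots> = c * real (card V) ^ (d + 2)"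
    by (simp only: power_add mult.assoc)
  finally have "(1 + eps) ^ j \<le> c * real (card V) ^ (d + 2)" .
  moreover have "1 + eps > 1" using \<open>eps > 0\<close> by simp
  ultimately show ?thesis
    unfolding Suc using le_log_of_power_le_poly[OF _ \<open>c \<ge> 1\<close> n_ge_2] by blast
qed

theorem mainTheorem5:
  fixes eps c :: real and d :: nat
  assumes "eps > 0"
  shows "\<exists>C::real. \<forall>V E w Ps k.
           wf_graph V E w
           \<and> (E \<noteq> {} \<longrightarrow> graph_Wmax E w / graph_Wmin E w \<le> c * real (card V) ^ d)
           \<and> parhac_run V E w eps Ps k
           \<longrightarrow> real k \<le> C * ln (real (card V))"
proof (intro exI allI impI, elim conjE)
  fix V E w Ps k
  assume g: "wf_graph V E w"
    and ratio: "E \<noteq> {} \<longrightarrow> graph_Wmax E w / graph_Wmin E w \<le> c * real (card V) ^ d"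
    and run: "parhac_run V E w eps Ps k"
  have "E \<noteq> {} \<Longrightarrow> graph_Wmax E w / graph_Wmin E w \<le> max c 1 * real (card V) ^ d"
    using ratio order.trans[OF _ mult_right_mono[of c "max c 1"]] by simp
  from parhac_run_phases_le_log[OF g run this \<open>eps > 0\<close>]
  show "real k \<le> (1 / ln 2 + ln (max c 1) / (ln (1 + eps) * ln 2) + real (d + 2) / ln (1 + eps))
      * ln (real (card V))"
    by simp
qed

end
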